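(* Let $0<f_1<f_2<f_3$ and consider on $M_h$ with $2h=1$ the reduced Lamé integrable system $(F_L,G_L)$, where $F_L=\ell_{12}^2+\ell_{13}^2+\ell_{14}^2$ and $G_L=f_1\ell_{34}^2+f_2\ell_{24}^2+f_3\ell_{23}^2$. The set of critical values of the momentum map $(F_L,G_L):M_h\to\mathbb R^2$ is composed of (parts of) the four straight lines $\mathfrak L_j: F_L=1-\frac{1}{f_j}G_L$ for $j=1,2,3$ and $\mathfrak L_4: F_L=0$.
   Context: $\mathbf L=(\ell_{12},\ell_{13},\ell_{14},\ell_{23},\ell_{24},\ell_{34})\in\mathbb R^6\cong\mathfrak{so}(4)^*$ with the Lie–Poisson bracket of $\mathfrak{so}(4)$ (extending $\ell_{ji}=-\ell_{ij}$: $\{\ell_{ij},\ell_{jk}\}=-\ell_{ik}$ for distinct $i,j,k$, and $\{\ell_{ij},\ell_{kl}\}=0$ when $\{i,j\}\cap\{k,l\}=\emptyset$). $M_h=\{\mathbf L:\sum_{i<j}\ell_{ij}^2=2h,\ \ell_{12}\ell_{34}-\ell_{13}\ell_{24}+\ell_{14}\ell_{23}=0\}\cong S^2\times S^2$ is a symplectic leaf. This system arises from separating the geodesic flow on $S^3$ in Lamé coordinates. *)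

theory Defs
  imports "HOL-Analysis.Analysis"
begin

definition l12 :: "real^6 \<Rightarrow> real" where "l12 L = L $ 1"
definition l13 :: "real^6 \<Rightarrow> real" where "l13 L = L $ 2"
definition l14 :: "real^6 \<Rightarrow> real" where "l14 L = L $ 3"
definition l23 :: "real^6 \<Rightarrow> real" where "l23 L = L $ 4"
definition l24 :: "real^6 \<Rightarrow> real" where "l24 L = L $ 5"
definition l34 :: "real^6 \<Rightarrow> real" where "l34 L = L $ 6"

definition cas1 :: "real^6 \<Rightarrow> real" where
  "cas1 L = (l12 L)^2 + (l13 L)^2 + (l14 L)^2 + (l23 L)^2 + (l24 L)^2 + (l34 L)^2"
definition cas2 :: "real^6 \<Rightarrow> real" where
  "cas2 L = l12 L * l34 L - l13 L * l24 L + l14 L * l23 L"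

definition Mh :: "real \<Rightarrow> (real^6) set" where
  "Mh h = {L. cas1 L = 2 * h \<and> cas2 L = 0}"

text \<open>Tangent space of M_h at p (M_h is a regular level set of the Casimirs).\<close>
definition leaf_tangent :: "real^6 \<Rightarrow> (real^6) set" where
  "leaf_tangent p = {v. frechet_derivative cas1 (at p) v = 0 \<and> frechet_derivative cas2 (at p) v = 0}"

definition crit_point_on_leaf ::
  "real \<Rightarrow> (real^6 \<Rightarrow> real) \<Rightarrow> (real^6 \<Rightarrow> real) \<Rightarrow> real^6 \<Rightarrow> bool" where
  "crit_point_on_leaf h F G p \<longleftrightarrow> p \<in> Mh h \<and>
     (\<exists>a b. (a, b) \<noteq> (0, 0) \<and>
        (\<forall>v \<in> leaf_tangent p.
           a * frechet_derivative F (at p) v + b * frechet_derivative G (at p) v = 0))"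

definition crit_values_on_leaf ::
  "real \<Rightarrow> (real^6 \<Rightarrow> real) \<Rightarrow> (real^6 \<Rightarrow> real) \<Rightarrow> (real \<times> real) set" where
  "crit_values_on_leaf h F G = (\<lambda>p. (F p, G p)) ` {p. crit_point_on_leaf h F G p}"

definition F_L :: "real^6 \<Rightarrow> real" where
  "F_L L = (l12 L)^2 + (l13 L)^2 + (l14 L)^2"
definition G_L :: "real \<Rightarrow> real \<Rightarrow> real \<Rightarrow> real^6 \<Rightarrow> real" where
  "G_L f1 f2 f3 L = f1 * (l34 L)^2 + f2 * (l24 L)^2 + f3 * (l23 L)^2"

end

theory Submission
  imports Defs
begin

text \<open>At a critical point p of (F_L, G_L) on the leaf, the Lagrange multiplier rule gives
 a \<nabla>F_L + b \<nabla>G_L = \<kappa> \<nabla>cas1 + \<mu> \<nabla>cas2 with (a, b) \<noteq> (0, 0), and \<nabla>cas2 is the Hodge star of p.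
 Pairing the (l12, l13, l14)-components of this equation with (l12, l13, l14) gives
 (a - \<kappa>) F_L = \<mu> cas2 = 0. So either F_L = 0, or \<kappa> = a; then \<mu> = 0, since otherwise p = 0,
 and (l23, l24, l34) is an eigenvector of diag(b f3, b f2, b f1) for the eigenvalue a. The f_j being
 distinct, it has a single nonzero coordinate j, and cas1 = 1 turns this into F_L = 1 - G_L / f_j.\<close>

lemma UNIV_6: "UNIV = {1, 2, 3, 4, 5, 6::6}"
proof -
  have "x = 1 \<or> x = 2 \<or> x = 3 \<or> x = 4 \<or> x = 5 \<or> x = 6" for x :: 6
  proof (induct x)
    case (of_int z)
    then have "z = 0 \<or> z = 1 \<or> z = 2 \<or> z = 3 \<or> z = 4 \<or> z = 5"
      by fastforce
    then show ?case
      by auto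
  qed
  then show ?thesis
    by auto
qed

lemma sum_6: "sum f (UNIV::6 set) = f 1 + f 2 + f 3 + f 4 + f 5 + f 6"
  unfolding UNIV_6 by (simp add: ac_simps)

lemma vector_6 [simp]:
  "(vector [x1, x2, x3, x4, x5, x6] :: ('a::zero)^6) $ 1 = x1"
  "(vector [x1, x2, x3, x4, x5, x6] :: ('a::zero)^6) $ 2 = x2"
  "(vector [x1, x2, x3, x4, x5, x6] :: ('a::zero)^6) $ 3 = x3"
  "(vector [x1, x2, x3, x4, x5, x6] :: ('a::zero)^6) $ 4 = x4"
  "(vector [x1, x2, x3, x4, x5, x6] :: ('a::zero)^6) $ 5 = x5"
  "(vector [x1, x2, x3, x4, x5, x6] :: ('a::zero)^6) $ 6 = x6"
  unfolding vector_def by simp_all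

lemma inner_vec_6:
  "x \<bullet> y = x$1 * y$1 + x$2 * y$2 + x$3 * y$3 + x$4 * y$4 + x$5 * y$5 + x$6 * y$6"
  for x y :: "real^6"
  by (simp add: inner_vec_def sum_6)

lemma has_derivative_vec_nth [derivative_intros]:
  "((\<lambda>x. x $ i) has_derivative (\<lambda>v. v $ i)) F"
  by (simp add: bounded_linear_imp_has_derivative bounded_linear_vec_nth)

lemma orthogonal_to_annihilator_imp_in_span:
  fixes g :: "'a::euclidean_space"
  assumes "\<And>v. (\<And>u. u \<in> S \<Longrightarrow> u \<bullet> v = 0) \<Longrightarrow> g \<bullet> v = 0"
  shows "g \<in> span S"
proof -
  have "y \<bullet> g = 0" if y: "y \<in> (span S)\<^sup>\<bottom>" for y
  proof -
    have "u \<bullet> y = 0" if "u \<in> S" for u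
      using y span_base[OF that] unfolding orthogonal_comp_def orthogonal_def by blast
    then show ?thesis
      by (simp add: assms inner_commute)
  qed
  then have "g \<in> (span S)\<^sup>\<bottom>\<^sup>\<bottom>"
    unfolding orthogonal_comp_def orthogonal_def by blast
  then show ?thesis
    by (simp add: orthogonal_comp_self)
qed

lemma in_span_pair_imp_combination:
  fixes g u w :: "'a::real_vector"
  assumes "g \<in> span {u, w}"
  obtains s t where "g = s *\<^sub>R u + t *\<^sub>R w"
  using assms by (auto simp: span_insert span_singleton diff_eq_eq) (metis add.commute)

definition hodge_star :: "real^6 \<Rightarrow> real^6" where
  "hodge_star x = vector [l34 x, - l24 x, l23 x, l14 x, - l13 x, l12 x]"

lemma has_derivative_cas1: "(cas1 has_derivative (\<lambda>v. 2 * (p \<bullet> v))) (at p)"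
  unfolding cas1_def l12_def l13_def l14_def l23_def l24_def l34_def
  by (auto intro!: derivative_eq_intros simp: inner_vec_6 algebra_simps)

lemma has_derivative_cas2: "(cas2 has_derivative (\<lambda>v. hodge_star p \<bullet> v)) (at p)"
  unfolding cas2_def hodge_star_def l12_def l13_def l14_def l23_def l24_def l34_def
  by (auto intro!: derivative_eq_intros simp: inner_vec_6 algebra_simps)

lemma has_derivative_F_L:
  "(F_L has_derivative (\<lambda>v. 2 * (vector [l12 p, l13 p, l14 p, 0, 0, 0] \<bullet> v))) (at p)"
  unfolding F_L_def l12_def l13_def l14_def
  by (auto intro!: derivative_eq_intros simp: inner_vec_6 algebra_simps)

lemma has_derivative_G_L:
  "(G_L f1 f2 f3 has_derivative
     (\<lambda>v. 2 * (vector [0, 0, 0, f3 * l23 p, f2 * l24 p, f1 * l34 p] \<bullet> v))) (at p)"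
  unfolding G_L_def l23_def l24_def l34_def
  by (auto intro!: derivative_eq_intros simp: inner_vec_6 algebra_simps)

lemma leaf_tangent_eq: "leaf_tangent p = {v. p \<bullet> v = 0 \<and> hodge_star p \<bullet> v = 0}"
  by (simp add: leaf_tangent_def has_derivative_cas1[THEN frechet_derivative_at, symmetric]
      has_derivative_cas2[THEN frechet_derivative_at, symmetric])

lemma crit_point_on_leaf_multipliers:
  assumes "crit_point_on_leaf h F_L (G_L f1 f2 f3) p"
  obtains a b \<kappa> \<mu> where "(a, b) \<noteq> (0, 0)" and
    "vector [a * l12 p, a * l13 p, a * l14 p, b * f3 * l23 p, b * f2 * l24 p, b * f1 * l34 p] =
       \<kappa> *\<^sub>R p + \<mu> *\<^sub>R hodge_star p"
proof -
  obtain a b where ab: "(a, b) \<noteq> (0, 0)" and crit: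
    "\<And>v. v \<in> leaf_tangent p \<Longrightarrow>
       a * frechet_derivative F_L (at p) v + b * frechet_derivative (G_L f1 f2 f3) (at p) v = 0"
    using assms unfolding crit_point_on_leaf_def by blast
  define g :: "real^6" where
    "g = vector [a * l12 p, a * l13 p, a * l14 p, b * f3 * l23 p, b * f2 * l24 p, b * f1 * l34 p]"
  have "g \<bullet> v = 0" if "p \<bullet> v = 0" and "hodge_star p \<bullet> v = 0" for v
  proof -
    have "a * (2 * (vector [l12 p, l13 p, l14 p, 0, 0, 0] \<bullet> v)) +
          b * (2 * (vector [0, 0, 0, f3 * l23 p, f2 * l24 p, f1 * l34 p] \<bullet> v)) = 0"
      using crit[of v] that
      by (simp add: leaf_tangent_eq has_derivative_F_L[THEN frechet_derivative_at, symmetric]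
          has_derivative_G_L[THEN frechet_derivative_at, symmetric])
    then show ?thesis
      by (simp add: g_def inner_vec_6 algebra_simps)
  qed
  then have "g \<in> span {p, hodge_star p}"
    by (intro orthogonal_to_annihilator_imp_in_span) blast
  then obtain \<kappa> \<mu> where "g = \<kappa> *\<^sub>R p + \<mu> *\<^sub>R hodge_star p"
    by (rule in_span_pair_imp_combination)
  then show ?thesis
    unfolding g_def by (rule that[OF ab])
qed

lemma multiplier_equation_components:
  assumes "vector [a * l12 p, a * l13 p, a * l14 p, b * f3 * l23 p, b * f2 * l24 p, b * f1 * l34 p] =
             \<kappa> *\<^sub>R p + \<mu> *\<^sub>R hodge_star p" (is "?g = ?h")
  shows "a * l12 p = \<kappa> * l12 p + \<mu> * l34 p" and "a * l13 p = \<kappa> * l13 p - \<mu> * l24 p"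
    and "a * l14 p = \<kappa> * l14 p + \<mu> * l23 p" and "b * f3 * l23 p = \<kappa> * l23 p + \<mu> * l14 p"
    and "b * f2 * l24 p = \<kappa> * l24 p - \<mu> * l13 p" and "b * f1 * l34 p = \<kappa> * l34 p + \<mu> * l12 p"
proof -
  have "?g $ i = ?h $ i" for i
    using assms by simp
  from this[of 1] this[of 2] this[of 3] this[of 4] this[of 5] this[of 6] show
    "a * l12 p = \<kappa> * l12 p + \<mu> * l34 p" and "a * l13 p = \<kappa> * l13 p - \<mu> * l24 p"
    and "a * l14 p = \<kappa> * l14 p + \<mu> * l23 p" and "b * f3 * l23 p = \<kappa> * l23 p + \<mu> * l14 p"
    and "b * f2 * l24 p = \<kappa> * l24 p - \<mu> * l13 p" and "b * f1 * l34 p = \<kappa> * l34 p + \<mu> * l12 p"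
    by (simp_all add: hodge_star_def l12_def l13_def l14_def l23_def l24_def l34_def)
qed

lemma diagonal_eigenvector_single_coordinate:
  fixes a b c1 c2 c3 y1 y2 y3 :: real
  assumes "(a, b) \<noteq> (0, 0)" and "c1 \<noteq> c2" "c1 \<noteq> c3" "c2 \<noteq> c3"
    and "b * c1 * y1 = a * y1" "b * c2 * y2 = a * y2" "b * c3 * y3 = a * y3"
  shows "(y2 = 0 \<and> y3 = 0) \<or> (y1 = 0 \<and> y3 = 0) \<or> (y1 = 0 \<and> y2 = 0)"
proof -
  have "c = d" if "b * c = a" and "b * d = a" for c d
    using assms(1) that by (cases "b = 0") auto
  moreover have "y1 \<noteq> 0 \<Longrightarrow> b * c1 = a" "y2 \<noteq> 0 \<Longrightarrow> b * c2 = a" "y3 \<noteq> 0 \<Longrightarrow> b * c3 = a"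
    using assms(5-7) by simp_all
  ultimately show ?thesis
    using assms(2-4) by metis
qed

lemma crit_point_on_leaf_on_lines:
  assumes f: "0 < f1" "f1 < f2" "f2 < f3"
    and crit: "crit_point_on_leaf (1/2) F_L (G_L f1 f2 f3) p"
  shows "F_L p = 1 - G_L f1 f2 f3 p / f1 \<or> F_L p = 1 - G_L f1 f2 f3 p / f2 \<or>
         F_L p = 1 - G_L f1 f2 f3 p / f3 \<or> F_L p = 0"
proof (cases "F_L p = 0")
  case False
  obtain a b \<kappa> \<mu> where ab: "(a, b) \<noteq> (0, 0)" and multipliers:
    "vector [a * l12 p, a * l13 p, a * l14 p, b * f3 * l23 p, b * f2 * l24 p, b * f1 * l34 p] =
       \<kappa> *\<^sub>R p + \<mu> *\<^sub>R hodge_star p"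
    using crit by (rule crit_point_on_leaf_multipliers)
  note e = multiplier_equation_components[OF multipliers]
  have sphere: "F_L p + (l23 p)\<^sup>2 + (l24 p)\<^sup>2 + (l34 p)\<^sup>2 = 1" and "cas2 p = 0"
    using crit by (simp_all add: crit_point_on_leaf_def Mh_def cas1_def F_L_def)
  moreover have "(a - \<kappa>) * F_L p = \<mu> * cas2 p"
    using e(1-3) unfolding F_L_def cas2_def by algebra
  ultimately have "\<kappa> = a"
    using False by simp
  then have y: "\<mu> * l23 p = 0" "\<mu> * l24 p = 0" "\<mu> * l34 p = 0"
    using e(1-3) by simp_all
  have "\<mu> = 0"
  proof (rule ccontr)
    assume "\<mu> \<noteq> 0"
    then have "l12 p = 0" "l13 p = 0" "l14 p = 0"
      using e(4-6) y by simp_all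
    with False show False
      by (simp add: F_L_def)
  qed
  with e(4-6) \<open>\<kappa> = a\<close>
  have "b * f3 * l23 p = a * l23 p" "b * f2 * l24 p = a * l24 p" "b * f1 * l34 p = a * l34 p"
    by simp_all
  with f have "(l24 p = 0 \<and> l34 p = 0) \<or> (l23 p = 0 \<and> l34 p = 0) \<or> (l23 p = 0 \<and> l24 p = 0)"
    by (intro diagonal_eigenvector_single_coordinate[OF ab]) simp_all
  then show ?thesis
    using sphere f by (auto simp: G_L_def)
qed simp

theorem proposition6:
  fixes f1 f2 f3 :: real
  assumes "0 < f1" and "f1 < f2" and "f2 < f3"
  shows "crit_values_on_leaf (1/2) F_L (G_L f1 f2 f3) \<subseteq>
           {(x, y). x = 1 - y / f1} \<union> {(x, y). x = 1 - y / f2} \<union>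
           {(x, y). x = 1 - y / f3} \<union> {(x, y). x = 0}"
proof
  fix z
  assume "z \<in> crit_values_on_leaf (1/2) F_L (G_L f1 f2 f3)"
  then obtain p where z: "z = (F_L p, G_L f1 f2 f3 p)"
    and crit: "crit_point_on_leaf (1/2) F_L (G_L f1 f2 f3) p"
    unfolding crit_values_on_leaf_def by blast
  from assms crit
  have "F_L p = 1 - G_L f1 f2 f3 p / f1 \<or> F_L p = 1 - G_L f1 f2 f3 p / f2 \<or>
        F_L p = 1 - G_L f1 f2 f3 p / f3 \<or> F_L p = 0"
    by (rule crit_point_on_leaf_on_lines)
  then show "z \<in> {(x, y). x = 1 - y / f1} \<union> {(x, y). x = 1 - y / f2} \<union>
                 {(x, y). x = 1 - y / f3} \<union> {(x, y). x = 0}"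
    using z by auto
qed

end
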